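(* Let $S$ be a Rauzy scheme for a recurrent infinite word $W$, and let $u$ be a bispecial factor of $W$ such that $F(l_1)\sqsubseteq u$ for some symmetric path $l_1$ of $S$. Then there is a symmetric path $l$ in $S$ with $F(l)=u$.
   Context: A factor $u$ of $W$ is right special if there are distinct letters $a\ne b$ with $ua$ and $ub$ factors of $W$, left special if there are distinct letters $a\ne b$ with $au,bu$ factors of $W$, and bispecial if it is both. An infinite word is recurrent if every factor occurs infinitely often. $u\sqsubseteq w$: $u$ is a factor of $w$; $u\sqsubseteq_k w$: $u$ occurs in $w$ at least $k$ times. A graph with words is a strongly connected finite directed graph (multiple edges and loops allowed) in which every edge $e$ carries a front word $F(e)$ and a back word $B(e)$, and every vertex either has in-degree $1$ and out-degree $>1$ (distributing vertex) or in-degree $>1$ and out-degree $1$ (collecting vertex). A path is a finite nonempty sequence of edges $v_1\dots v_n$ with each $v_{i+1}$ starting where $v_i$ ends; subpaths and $s_1\sqsubseteq_k s_2$ are defined via edge records. A path is symmetric if its first edge starts at a collecting vertex and its last edge ends at a distributing vertex. For $s=v_1\dots v_n$, $F(s)$ is the concatenation, in order, of the front words of $v_1$ and of all $v_i$ ($i\ge2$) starting at a distributing vertex; $B(s)$ is the concatenation, in order, of the back words of all $v_i$ ($i\le n-1$) ending at a collecting vertex and of $v_n$. A Rauzy scheme for $W$ is a graph with words such that: (1) it has more than one edge; (2) front words of edges leaving a common distributing vertex have pairwise distinct first letters, and back words of edges entering a common collecting vertex have pairwise distinct last letters; (3) $F(s)=B(s)$ for every symmetric path $s$; (4) for symmetric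 paths $s_1,s_2$ and $k\ge1$, $F(s_1)\sqsubseteq_k F(s_2)$ implies $s_1\sqsubseteq_k s_2$; (5) all words on edges are factors of $W$; (6) every factor of $W$ is a factor of $F(s)$ for some symmetric path $s$; (7) for every edge $e$ there is a factor $u_e$ of $W$ such that every symmetric path $s$ with $u_e\sqsubseteq F(s)$ passes through $e$. *)

theory Defs
  imports Main
begin

definition factor_of_inf :: "'a list \<Rightarrow> (nat \<Rightarrow> 'a) \<Rightarrow> bool" where
  "factor_of_inf u W \<longleftrightarrow> (\<exists>i. u = map W [i..<i + length u])"

definition recurrent :: "(nat \<Rightarrow> 'a) \<Rightarrow> bool" where
  "recurrent W \<longleftrightarrow> (\<forall>u. factor_of_inf u W \<longrightarrow>
      infinite {i. u = map W [i..<i + length u]})"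

definition right_special :: "'a list \<Rightarrow> (nat \<Rightarrow> 'a) \<Rightarrow> bool" where
  "right_special u W \<longleftrightarrow> (\<exists>a b. a \<noteq> b \<and> factor_of_inf (u @ [a]) W \<and> factor_of_inf (u @ [b]) W)"

definition left_special :: "'a list \<Rightarrow> (nat \<Rightarrow> 'a) \<Rightarrow> bool" where
  "left_special u W \<longleftrightarrow> (\<exists>a b. a \<noteq> b \<and> factor_of_inf (a # u) W \<and> factor_of_inf (b # u) W)"

definition bispecial :: "'a list \<Rightarrow> (nat \<Rightarrow> 'a) \<Rightarrow> bool" where
  "bispecial u W \<longleftrightarrow> factor_of_inf u W \<and> right_special u W \<and> left_special u W"

definition occurrences :: "'a list \<Rightarrow> 'a list \<Rightarrow> nat set" where
  "occurrences u w = {i. i + length u \<le> length w \<and> take (length u) (drop i w) = u}"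

definition occ_count :: "'a list \<Rightarrow> 'a list \<Rightarrow> nat" where
  "occ_count u w = card (occurrences u w)"

definition factor :: "'a list \<Rightarrow> 'a list \<Rightarrow> bool" where
  "factor u w \<longleftrightarrow> (\<exists>p q. w = p @ u @ q)"

record ('v, 'e, 'a) gww =
  verts :: "'v set"
  edges :: "'e set"
  src :: "'e \<Rightarrow> 'v"
  tgt :: "'e \<Rightarrow> 'v"
  frontw :: "'e \<Rightarrow> 'a list"
  backw :: "'e \<Rightarrow> 'a list"

definition in_deg :: "('v, 'e, 'a) gww \<Rightarrow> 'v \<Rightarrow> nat" where
  "in_deg G v = card {e \<in> edges G. tgt G e = v}"

definition out_deg :: "('v, 'e, 'a) gww \<Rightarrow> 'v \<Rightarrow> nat" where
  "out_deg G v = card {e \<in> edges G. src G e = v}"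

definition distributing :: "('v, 'e, 'a) gww \<Rightarrow> 'v \<Rightarrow> bool" where
  "distributing G v \<longleftrightarrow> in_deg G v = 1 \<and> out_deg G v > 1"

definition collecting :: "('v, 'e, 'a) gww \<Rightarrow> 'v \<Rightarrow> bool" where
  "collecting G v \<longleftrightarrow> in_deg G v > 1 \<and> out_deg G v = 1"

definition edge_rel :: "('v, 'e, 'a) gww \<Rightarrow> ('v \<times> 'v) set" where
  "edge_rel G = {(src G e, tgt G e) | e. e \<in> edges G}"

definition graph_with_words :: "('v, 'e, 'a) gww \<Rightarrow> bool" where
  "graph_with_words G \<longleftrightarrow>
     finite (verts G) \<and> finite (edges G) \<and>
     (\<forall>e \<in> edges G. src G e \<in> verts G \<and> tgt G e \<in> verts G) \<and>
     (\<forall>v \<in> verts G. \<forall>w \<in> verts G. (v, w) \<in> (edge_rel G)\<^sup>*) \<and>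
     (\<forall>v \<in> verts G. distributing G v \<or> collecting G v)"

definition is_path :: "('v, 'e, 'a) gww \<Rightarrow> 'e list \<Rightarrow> bool" where
  "is_path G s \<longleftrightarrow> s \<noteq> [] \<and> set s \<subseteq> edges G \<and>
     (\<forall>i. Suc i < length s \<longrightarrow> tgt G (s ! i) = src G (s ! Suc i))"

definition symmetric_path :: "('v, 'e, 'a) gww \<Rightarrow> 'e list \<Rightarrow> bool" where
  "symmetric_path G s \<longleftrightarrow> is_path G s \<and>
     collecting G (src G (hd s)) \<and> distributing G (tgt G (last s))"

definition path_front :: "('v, 'e, 'a) gww \<Rightarrow> 'e list \<Rightarrow> 'a list" where
  "path_front G s = frontw G (hd s) @
     concat (map (frontw G) (filter (\<lambda>e. distributing G (src G e)) (tl s)))"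

definition path_back :: "('v, 'e, 'a) gww \<Rightarrow> 'e list \<Rightarrow> 'a list" where
  "path_back G s =
     concat (map (backw G) (filter (\<lambda>e. collecting G (tgt G e)) (butlast s))) @ backw G (last s)"

definition rauzy_scheme :: "('v, 'e, 'a) gww \<Rightarrow> (nat \<Rightarrow> 'a) \<Rightarrow> bool" where
  "rauzy_scheme G W \<longleftrightarrow> graph_with_words G \<and>
     \<comment> \<open>(1)\<close>
     card (edges G) > 1 \<and>
     \<comment> \<open>(2)\<close>
     (\<forall>e1 \<in> edges G. \<forall>e2 \<in> edges G. e1 \<noteq> e2 \<and> src G e1 = src G e2
        \<and> distributing G (src G e1) \<longrightarrow>
        frontw G e1 \<noteq> [] \<and> frontw G e2 \<noteq> [] \<and> hd (frontw G e1) \<noteq> hd (frontw G e2)) \<and>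
     (\<forall>e1 \<in> edges G. \<forall>e2 \<in> edges G. e1 \<noteq> e2 \<and> tgt G e1 = tgt G e2
        \<and> collecting G (tgt G e1) \<longrightarrow>
        backw G e1 \<noteq> [] \<and> backw G e2 \<noteq> [] \<and> last (backw G e1) \<noteq> last (backw G e2)) \<and>
     \<comment> \<open>(3)\<close>
     (\<forall>s. symmetric_path G s \<longrightarrow> path_front G s = path_back G s) \<and>
     \<comment> \<open>(4)\<close>
     (\<forall>s1 s2 k. symmetric_path G s1 \<and> symmetric_path G s2 \<and> k \<ge> 1 \<and>
        occ_count (path_front G s1) (path_front G s2) \<ge> k \<longrightarrow> occ_count s1 s2 \<ge> k) \<and>
     \<comment> \<open>(5)\<close>
     (\<forall>e \<in> edges G. factor_of_inf (frontw G e) W \<and> factor_of_inf (backw G e) W) \<and>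
     \<comment> \<open>(6)\<close>
     (\<forall>u. factor_of_inf u W \<longrightarrow> (\<exists>s. symmetric_path G s \<and> factor u (path_front G s))) \<and>
     \<comment> \<open>(7)\<close>
     (\<forall>e \<in> edges G. \<exists>u. factor_of_inf u W \<and>
        (\<forall>s. symmetric_path G s \<and> factor u (path_front G s) \<longrightarrow> e \<in> set s))"

end

theory Submission
  imports Defs
begin

text \<open>
  Among the symmetric paths l whose front word F(l) is a factor of u,
  choose one with F(l) as long as possible, and write u = x F(l) y.  If y were
  nonempty, u being right special gives letters a \<noteq> b with ua, ub factors of W.
  By condition (6) each of them lies in some F(s); by condition (4) the occurrence
  of F(l) inside F(s) is induced by an occurrence of the path l inside s, so the edge
  e of s following l leaves the distributing vertex tgt(last l) and F(s) continues
  after F(l) with the front word of e.  Maximality of l forbids frontw(e) to fit into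
  y, hence frontw(e) = y c r with c = a resp. c = b.  The two resulting edges leave
  the same distributing vertex and have front words with the same first letter,
  contradicting condition (2).  Symmetrically (with back words and condition (3))
  x is empty, so u = F(l).
\<close>

lemma is_path_Cons:
  "is_path G (e # ds) \<longleftrightarrow>
     e \<in> edges G \<and> (ds = [] \<or> (is_path G ds \<and> tgt G e = src G (hd ds)))"
proof (cases ds)
  case Nil
  then show ?thesis by (simp add: is_path_def)
next
  case (Cons d ds')
  have "(\<forall>i. Suc i < length (e # ds) \<longrightarrow> tgt G ((e # ds) ! i) = src G ((e # ds) ! Suc i)) \<longleftrightarrow>
        tgt G e = src G d \<and> (\<forall>i. Suc i < length ds \<longrightarrow> tgt G (ds ! i) = src G (ds ! Suc i))"
    (is "?all \<longleftrightarrow> _")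
  proof
    assume ?all
    then show "tgt G e = src G d \<and> (\<forall>i. Suc i < length ds \<longrightarrow> tgt G (ds ! i) = src G (ds ! Suc i))"
      using Cons by (metis Suc_less_eq length_Cons nth_Cons_0 nth_Cons_Suc zero_less_Suc)
  qed (auto simp: Cons less_Suc_eq_0_disj)
  then show ?thesis
    using Cons by (auto simp: is_path_def)
qed

lemma is_path_append:
  assumes "xs \<noteq> []" and "ys \<noteq> []"
  shows "is_path G (xs @ ys) \<longleftrightarrow>
           is_path G xs \<and> is_path G ys \<and> tgt G (last xs) = src G (hd ys)"
  using assms
proof (induction xs)
  case (Cons x xs)
  then show ?case by (cases "xs = []") (auto simp: is_path_Cons)
qed simp

lemma is_path_appendD:
  assumes "is_path G (xs @ ys)" and "xs \<noteq> []"
  shows "is_path G xs"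
  using assms is_path_append[of xs ys G] by (cases "ys = []") auto

lemma is_path_appendD2:
  assumes "is_path G (xs @ ys)" and "ys \<noteq> []"
  shows "is_path G ys"
  using assms is_path_append[of xs ys G] by (cases "xs = []") auto

lemma symmetric_pathD:
  assumes "symmetric_path G l"
  shows "l \<noteq> []" "is_path G l" "collecting G (src G (hd l))" "distributing G (tgt G (last l))"
  using assms by (simp_all add: symmetric_path_def is_path_def)

definition inner_front :: "('v, 'e, 'a) gww \<Rightarrow> 'e list \<Rightarrow> 'a list" where
  "inner_front G t = concat (map (frontw G) (filter (\<lambda>e. distributing G (src G e)) t))"

definition inner_back :: "('v, 'e, 'a) gww \<Rightarrow> 'e list \<Rightarrow> 'a list" where
  "inner_back G t = concat (map (backw G) (filter (\<lambda>e. collecting G (tgt G e)) t))"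

lemma inner_front_simps [simp]:
  "inner_front G [] = []"
  "inner_front G (xs @ ys) = inner_front G xs @ inner_front G ys"
  "inner_front G (e # ys) =
     (if distributing G (src G e) then frontw G e @ inner_front G ys else inner_front G ys)"
  by (auto simp: inner_front_def)

lemma inner_back_simps [simp]:
  "inner_back G [] = []"
  "inner_back G (xs @ ys) = inner_back G xs @ inner_back G ys"
  "inner_back G (e # ys) =
     (if collecting G (tgt G e) then backw G e @ inner_back G ys else inner_back G ys)"
  by (auto simp: inner_back_def)

lemma path_front_append:
  "s \<noteq> [] \<Longrightarrow> path_front G (s @ t) = path_front G s @ inner_front G t"
  by (cases s) (auto simp: path_front_def inner_front_def)

lemma path_back_append:
  "t \<noteq> [] \<Longrightarrow> path_back G (s @ t) = inner_back G s @ path_back G t"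
  by (auto simp: path_back_def inner_back_def butlast_append)

lemma rauzy_front_eq_back:
  "rauzy_scheme G W \<Longrightarrow> symmetric_path G s \<Longrightarrow> path_front G s = path_back G s"
  by (simp add: rauzy_scheme_def)

lemma rauzy_occurrence_transfer:
  "rauzy_scheme G W \<Longrightarrow> symmetric_path G s1 \<Longrightarrow> symmetric_path G s2 \<Longrightarrow> k \<ge> 1 \<Longrightarrow>
   occ_count (path_front G s1) (path_front G s2) \<ge> k \<Longrightarrow> occ_count s1 s2 \<ge> k"
  unfolding rauzy_scheme_def by blast

lemma rauzy_covers:
  "rauzy_scheme G W \<Longrightarrow> factor_of_inf u W \<Longrightarrow>
   \<exists>s. symmetric_path G s \<and> factor u (path_front G s)"
  unfolding rauzy_scheme_def by blast

lemma rauzy_front_heads: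
  "rauzy_scheme G W \<Longrightarrow> e1 \<in> edges G \<Longrightarrow> e2 \<in> edges G \<Longrightarrow> e1 \<noteq> e2 \<Longrightarrow>
   src G e1 = src G e2 \<Longrightarrow> distributing G (src G e1) \<Longrightarrow>
   frontw G e1 \<noteq> [] \<and> frontw G e2 \<noteq> [] \<and> hd (frontw G e1) \<noteq> hd (frontw G e2)"
  unfolding rauzy_scheme_def by blast

lemma rauzy_back_lasts:
  "rauzy_scheme G W \<Longrightarrow> e1 \<in> edges G \<Longrightarrow> e2 \<in> edges G \<Longrightarrow> e1 \<noteq> e2 \<Longrightarrow>
   tgt G e1 = tgt G e2 \<Longrightarrow> collecting G (tgt G e1) \<Longrightarrow>
   backw G e1 \<noteq> [] \<and> backw G e2 \<noteq> [] \<and> last (backw G e1) \<noteq> last (backw G e2)"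
  unfolding rauzy_scheme_def by blast

lemma card_gt_one_other:
  assumes "card {y \<in> A. P y} > 1" and "x \<in> A"
  shows "\<exists>y \<in> A. P y \<and> y \<noteq> x"
proof (rule ccontr)
  assume "\<not> ?thesis"
  then have "{y \<in> A. P y} \<subseteq> {x}" by auto
  then have "card {y \<in> A. P y} \<le> 1"
    using card_mono[of "{x}"] by fastforce
  with assms(1) show False by simp
qed

text \<open>Every edge leaving a distributing vertex has a sibling, so by (2) its front word
  is nonempty; dually for back words of edges entering a collecting vertex.\<close>
lemma front_nonempty:
  assumes R: "rauzy_scheme G W" and e: "e \<in> edges G" and d: "distributing G (src G e)"
  shows "frontw G e \<noteq> []"
proof -
  obtain e' where "e' \<in> edges G" "src G e' = src G e" "e' \<noteq> e"
    using card_gt_one_other[of "edges G" "\<lambda>e'. src G e' = src G e" e] d e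
    by (auto simp: distributing_def out_deg_def)
  then show ?thesis using rauzy_front_heads[OF R e, of e'] d by auto
qed

lemma back_nonempty:
  assumes R: "rauzy_scheme G W" and e: "e \<in> edges G" and c: "collecting G (tgt G e)"
  shows "backw G e \<noteq> []"
proof -
  obtain e' where "e' \<in> edges G" "tgt G e' = tgt G e" "e' \<noteq> e"
    using card_gt_one_other[of "edges G" "\<lambda>e'. tgt G e' = tgt G e" e] c e
    by (auto simp: collecting_def in_deg_def)
  then show ?thesis using rauzy_back_lasts[OF R e, of e'] c by auto
qed

text \<open>Inside a symmetric path, a symmetric subpath l preceded by s1 contributes F(l)
  right after the back words of s1; this is condition (3) applied to s1 @ l.\<close>
lemma path_front_before_subpath:
  assumes R: "rauzy_scheme G W" and ss: "symmetric_path G (s1 @ l @ s2)"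
    and sl: "symmetric_path G l"
  shows "path_front G (s1 @ l) = inner_back G s1 @ path_front G l"
proof (cases "s1 = []")
  case False
  have ln: "l \<noteq> []" using symmetric_pathD(1)[OF sl] .
  have "is_path G ((s1 @ l) @ s2)" using symmetric_pathD(2)[OF ss] by simp
  then have "is_path G (s1 @ l)" using ln by (auto intro: is_path_appendD)
  then have "symmetric_path G (s1 @ l)"
    using ss sl False ln by (simp add: symmetric_path_def)
  then have "path_front G (s1 @ l) = path_back G (s1 @ l)" by (rule rauzy_front_eq_back[OF R])
  also have "\<dots> = inner_back G s1 @ path_back G l" using path_back_append ln by blast
  also have "\<dots> = inner_back G s1 @ path_front G l" using rauzy_front_eq_back[OF R sl] by simp
  finally show ?thesis .
qed simp

subsection \<open>Occurrences of a subpath induce all occurrences of its front word\<close>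

lemma finite_occurrences: "finite (occurrences u w)"
  by (rule finite_subset[of _ "{..length w}"]) (auto simp: occurrences_def)

lemma occurrence_split:
  assumes "i \<in> occurrences l s"
  shows "s = take i s @ l @ drop (i + length l) s"
proof -
  have "take (length l) (drop i s) = l" using assms by (simp add: occurrences_def)
  then show ?thesis by (metis append_take_drop_id drop_drop add.commute)
qed

lemma front_at_occurrence:
  assumes R: "rauzy_scheme G W" and ss: "symmetric_path G s" and sl: "symmetric_path G l"
    and i: "i \<in> occurrences l s"
  shows "path_front G s =
           inner_back G (take i s) @ path_front G l @ inner_front G (drop (i + length l) s)"
proof -
  have ln: "l \<noteq> []" using symmetric_pathD(1)[OF sl] .
  have "path_front G s = path_front G ((take i s @ l) @ drop (i + length l) s)"
    using occurrence_split[OF i] by simp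
  also have "\<dots> = path_front G (take i s @ l) @ inner_front G (drop (i + length l) s)"
    using path_front_append ln by blast
  also have "path_front G (take i s @ l) = inner_back G (take i s) @ path_front G l"
    using path_front_before_subpath[OF R _ sl, of "take i s" "drop (i + length l) s"]
      occurrence_split[OF i] ss by simp
  finally show ?thesis by simp
qed

text \<open>Distinct occurrences of l give distinct occurrences of F(l): between two of them
  the path enters the collecting vertex src(hd l), contributing a nonempty back word.\<close>
lemma occurrence_position_strict_mono:
  assumes R: "rauzy_scheme G W" and sp: "is_path G s" and sl: "symmetric_path G l"
    and i: "i \<in> occurrences l s" and i': "i' \<in> occurrences l s" and lt: "i < i'"
  shows "length (inner_back G (take i s)) < length (inner_back G (take i' s))"
proof -
  have ln: "l \<noteq> []" using symmetric_pathD(1)[OF sl] .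
  have il: "i' + length l \<le> length s" using i' by (simp add: occurrences_def)
  then have i's: "i' < length s" using ln by (cases l) auto
  obtain j where j: "i' = Suc j" using lt by (cases i') auto
  have take_i': "take i' s = take j s @ [s ! j]" using j i's by (simp add: take_Suc_conv_app_nth)
  have "drop i' s = l @ drop (i' + length l) s"
    using occurrence_split[OF i'] by (metis append_eq_conv_conj length_take min.absorb2 il le_add1 order_trans)
  then have "s ! i' = hd l" using i's ln by (metis hd_append2 hd_drop_conv_nth)
  moreover have "tgt G (s ! j) = src G (s ! i')" using sp i's j unfolding is_path_def by simp
  ultimately have col: "collecting G (tgt G (s ! j))" using symmetric_pathD(3)[OF sl] by simp
  have "s ! j \<in> edges G" using sp i's j unfolding is_path_def by auto
  then have bn: "backw G (s ! j) \<noteq> []" using back_nonempty[OF R _ col] by blast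
  have "take j s = take i s @ take (j - i) (drop i s)" using lt j
    by (metis le_add_diff_inverse less_Suc_eq_le take_add)
  then have "length (inner_back G (take i s)) \<le> length (inner_back G (take j s))" by simp
  also have "\<dots> < length (inner_back G (take i' s))" using take_i' col bn by simp
  finally show ?thesis .
qed

text \<open>Key consequence of condition (4): every occurrence of F(l) inside F(s) comes
  from an occurrence of l inside s, splitting s as s1 l s2 with the surrounding
  words given by the back words of s1 and the front words of s2.\<close>
lemma occurrence_decomposition:
  assumes R: "rauzy_scheme G W" and ss: "symmetric_path G s" and sl: "symmetric_path G l"
    and eq: "path_front G s = A @ path_front G l @ z"
  shows "\<exists>s1 s2. s = s1 @ l @ s2 \<and> inner_back G s1 = A \<and> z = inner_front G s2"
proof -
  define occL where "occL = occurrences l s"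
  define occF where "occF = occurrences (path_front G l) (path_front G s)"
  define pos where "pos i = length (inner_back G (take i s))" for i
  have pos_occF: "pos ` occL \<subseteq> occF"
    using front_at_occurrence[OF R ss sl]
    by (auto simp: occL_def occF_def occurrences_def pos_def)
  have inj: "inj_on pos occL"
    using occurrence_position_strict_mono[OF R symmetric_pathD(2)[OF ss] sl]
    by (intro inj_onI) (metis linorder_neqE_nat less_irrefl occL_def pos_def)
  have A_occF: "length A \<in> occF" using eq by (simp add: occF_def occurrences_def)
  then have "card occF \<ge> 1"
    using finite_occurrences by (metis occF_def One_nat_def Suc_leI card_gt_0_iff empty_iff)
  then have "occ_count l s \<ge> card occF"
    using rauzy_occurrence_transfer[OF R sl ss] by (simp add: occ_count_def occF_def)
  then have "card (pos ` occL) \<ge> card occF"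
    using card_image[OF inj] by (simp add: occ_count_def occL_def)
  then have "pos ` occL = occF"
    using pos_occF finite_occurrences by (metis card_seteq occF_def)
  then obtain i where i: "i \<in> occL" "pos i = length A" using A_occF by force
  have "inner_back G (take i s) @ path_front G l @ inner_front G (drop (i + length l) s) =
        A @ path_front G l @ z"
    using front_at_occurrence[OF R ss sl] i(1) eq by (simp add: occL_def)
  then have "inner_back G (take i s) = A \<and> z = inner_front G (drop (i + length l) s)"
    using i(2) by (simp add: pos_def)
  then show ?thesis using occurrence_split i(1) occL_def by blast
qed

subsection \<open>Extending a symmetric path by one branch\<close>

lemma shortest_distributing_prefix:
  "is_path G p \<Longrightarrow> distributing G (tgt G (last p)) \<Longrightarrow>
   \<exists>q r. p = q @ r \<and> q \<noteq> [] \<and> distributing G (tgt G (last q)) \<and> inner_front G (tl q) = []"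
proof (induction p)
  case (Cons e ds)
  show ?case
  proof (cases "distributing G (tgt G e)")
    case True
    then show ?thesis by (intro exI[of _ "[e]"] exI[of _ ds]) simp
  next
    case False
    then have dn: "ds \<noteq> []" using Cons.prems by auto
    then have p: "is_path G ds" "tgt G e = src G (hd ds)" using Cons.prems(1) by (auto simp: is_path_Cons)
    have "distributing G (tgt G (last ds))" using Cons.prems(2) dn by simp
    then obtain q r where qr: "ds = q @ r" "q \<noteq> []" "distributing G (tgt G (last q))"
        "inner_front G (tl q) = []"
      using Cons.IH p by blast
    have "inner_front G q = []" using qr p False dn by (cases q) auto
    then show ?thesis using qr by (intro exI[of _ "e # q"] exI[of _ r]) simp
  qed
qed (simp add: is_path_def)

lemma shortest_collecting_suffix:
  "is_path G p \<Longrightarrow> collecting G (src G (hd p)) \<Longrightarrow>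
   \<exists>r q. p = r @ q \<and> q \<noteq> [] \<and> collecting G (src G (hd q)) \<and> inner_back G (butlast q) = []"
proof (induction p rule: rev_induct)
  case (snoc e p')
  show ?case
  proof (cases "p' = [] \<or> collecting G (src G e)")
    case True
    then show ?thesis using snoc.prems by (intro exI[of _ p'] exI[of _ "[e]"]) auto
  next
    case False
    then have pn: "p' \<noteq> []" and nc: "\<not> collecting G (src G e)" by auto
    then have p: "is_path G p'" "tgt G (last p') = src G e"
      using snoc.prems(1) is_path_append[of p' "[e]" G] by auto
    have "collecting G (src G (hd p'))" using snoc.prems(2) pn by simp
    then obtain r q where qr: "p' = r @ q" "q \<noteq> []" "collecting G (src G (hd q))"
        "inner_back G (butlast q) = []"
      using snoc.IH p by blast
    have "q = butlast q @ [last q]" using qr(2) by simp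
    then have "inner_back G q = []" using qr p nc pn
      by (metis inner_back_simps append_self_conv last_appendR)
    then show ?thesis using qr by (intro exI[of _ r] exI[of _ "q @ [e]"]) simp
  qed
qed (simp add: is_path_def)

lemma extend_right:
  assumes R: "rauzy_scheme G W" and ss: "symmetric_path G s" and sl: "symmetric_path G l"
    and eq: "path_front G s = A @ path_front G l @ z" and zn: "z \<noteq> []"
  shows "\<exists>e l'. e \<in> edges G \<and> src G e = tgt G (last l) \<and> symmetric_path G l' \<and>
     path_front G l' = path_front G l @ frontw G e \<and> (\<exists>w. z = frontw G e @ w)"
proof -
  obtain s1 s2 where s: "s = s1 @ l @ s2" and z: "z = inner_front G s2"
    using occurrence_decomposition[OF R ss sl eq] by blast
  have s2n: "s2 \<noteq> []" using z zn by auto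
  note L = symmetric_pathD[OF sl]
  have pl2: "is_path G (l @ s2)" using symmetric_pathD(2)[OF ss] s L(1) is_path_appendD2 by blast
  then have p2: "is_path G s2" "tgt G (last l) = src G (hd s2)"
    using is_path_append[of l s2 G] L(1) s2n by auto
  have "distributing G (tgt G (last s2))" using symmetric_pathD(4)[OF ss] s s2n by simp
  then obtain q r where qr: "s2 = q @ r" "q \<noteq> []" "distributing G (tgt G (last q))"
      "inner_front G (tl q) = []"
    using shortest_distributing_prefix[OF p2(1)] by blast
  define e where "e = hd q"
  have q: "q = e # tl q" using qr(2) e_def by simp
  have hs2: "hd s2 = e" using qr e_def by simp
  have e: "e \<in> edges G" using p2(1) s2n hs2 by (cases s2) (auto simp: is_path_Cons)
  have de: "distributing G (src G e)" using L(4) p2(2) hs2 by simp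
  have "is_path G (l @ q)" using pl2 qr(1) L(1) is_path_appendD[of G "l @ q" r] by simp
  then have sym': "symmetric_path G (l @ q)" using L qr(2,3) by (simp add: symmetric_path_def)
  have "inner_front G q = frontw G e" using q de qr(4) by (metis inner_front_simps(3) append.right_neutral)
  then have "path_front G (l @ q) = path_front G l @ frontw G e"
    using path_front_append L(1) by metis
  moreover have "z = frontw G e @ inner_front G r" using z qr(1) \<open>inner_front G q = frontw G e\<close> by simp
  ultimately show ?thesis using e de p2(2) hs2 sym' by (intro exI[of _ e] exI[of _ "l @ q"]) auto
qed

lemma extend_left:
  assumes R: "rauzy_scheme G W" and ss: "symmetric_path G s" and sl: "symmetric_path G l"
    and eq: "path_front G s = A @ path_front G l @ z" and An: "A \<noteq> []"
  shows "\<exists>e l'. e \<in> edges G \<and> tgt G e = src G (hd l) \<and> symmetric_path G l' \<and>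
     path_front G l' = backw G e @ path_front G l \<and> (\<exists>w. A = w @ backw G e)"
proof -
  obtain s1 s2 where s: "s = s1 @ l @ s2" and A: "inner_back G s1 = A"
    using occurrence_decomposition[OF R ss sl eq] by blast
  have s1n: "s1 \<noteq> []" using A An by auto
  note L = symmetric_pathD[OF sl]
  have "is_path G ((s1 @ l) @ s2)" using symmetric_pathD(2)[OF ss] s by simp
  then have pl1: "is_path G (s1 @ l)" using L(1) is_path_appendD by blast
  then have p1: "is_path G s1" "tgt G (last s1) = src G (hd l)"
    using is_path_append[of s1 l G] L(1) s1n by auto
  have "collecting G (src G (hd s1))" using symmetric_pathD(3)[OF ss] s s1n by simp
  then obtain r q where qr: "s1 = r @ q" "q \<noteq> []" "collecting G (src G (hd q))"
      "inner_back G (butlast q) = []"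
    using shortest_collecting_suffix[OF p1(1)] by blast
  define e where "e = last q"
  have q: "q = butlast q @ [e]" using qr(2) e_def by simp
  have ls1: "last s1 = e" using qr e_def by simp
  have e: "e \<in> edges G" using p1(1) ls1 s1n unfolding is_path_def by (metis last_in_set subsetD)
  have ce: "collecting G (tgt G e)" using L(3) p1(2) ls1 by simp
  have "is_path G (q @ l)" using pl1 qr(1) L(1) is_path_appendD2[of G r "q @ l"] by simp
  then have sym': "symmetric_path G (q @ l)" using L qr(2,3) by (simp add: symmetric_path_def)
  have Cq: "inner_back G q = backw G e"
    using q ce qr(4) by (metis inner_back_simps append_Nil append.right_neutral)
  have "path_front G (q @ l) = path_back G (q @ l)" using rauzy_front_eq_back[OF R sym'] .
  also have "\<dots> = inner_back G q @ path_back G l" using path_back_append L(1) by blast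
  also have "\<dots> = backw G e @ path_front G l" using Cq rauzy_front_eq_back[OF R sl] by simp
  finally have "path_front G (q @ l) = backw G e @ path_front G l" .
  moreover have "A = inner_back G r @ backw G e" using A qr(1) Cq by simp
  ultimately show ?thesis using e ce p1(2) ls1 sym' by (intro exI[of _ e] exI[of _ "q @ l"]) auto
qed

subsection \<open>A longest symmetric path inside a bispecial factor\<close>

definition longest_inner_path :: "('v, 'e, 'a) gww \<Rightarrow> 'a list \<Rightarrow> 'e list \<Rightarrow> bool" where
  "longest_inner_path G u l \<longleftrightarrow>
     symmetric_path G l \<and> factor (path_front G l) u \<and>
     (\<forall>l'. symmetric_path G l' \<and> factor (path_front G l') u \<longrightarrow>
        length (path_front G l') \<le> length (path_front G l))"

text \<open>Front words inside u have length at most |u|, so a longest one exists.\<close>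
lemma longest_inner_path_exists:
  assumes "\<exists>l1. symmetric_path G l1 \<and> factor (path_front G l1) u"
  shows "\<exists>l. longest_inner_path G u l"
proof -
  define P where "P l \<longleftrightarrow> symmetric_path G l \<and> factor (path_front G l) u" for l
  obtain l1 where "P l1" using assms P_def by blast
  moreover have "\<forall>l. P l \<longrightarrow> length (path_front G l) < Suc (length u)"
    by (auto simp: P_def factor_def)
  ultimately show ?thesis
    using ex_has_greatest_nat[of P l1 "\<lambda>l. length (path_front G l)" "Suc (length u)"]
    unfolding longest_inner_path_def P_def by blast
qed

lemma right_extension_edge:
  assumes R: "rauzy_scheme G W" and lmax: "longest_inner_path G u l"
    and u: "u = x @ path_front G l @ y" and uc: "factor_of_inf (u @ [c]) W"
  shows "\<exists>e r. e \<in> edges G \<and> src G e = tgt G (last l) \<and> frontw G e = y @ c # r"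
proof -
  have sl: "symmetric_path G l" using lmax by (simp add: longest_inner_path_def)
  obtain s p q where s: "symmetric_path G s" and "path_front G s = p @ (u @ [c]) @ q"
    using rauzy_covers[OF R uc] by (auto simp: factor_def)
  then have "path_front G s = (p @ x) @ path_front G l @ (y @ [c] @ q)" using u by simp
  then obtain e l' w where e: "e \<in> edges G" "src G e = tgt G (last l)" "symmetric_path G l'"
      "path_front G l' = path_front G l @ frontw G e" "y @ [c] @ q = frontw G e @ w"
    using extend_right[OF R s sl] by blast
  have fn: "frontw G e \<noteq> []" using front_nonempty[OF R e(1)] e(2) symmetric_pathD(4)[OF sl] by simp
  have "\<not> (\<exists>r. y = frontw G e @ r)"
  proof
    assume "\<exists>r. y = frontw G e @ r"
    then obtain r where "u = x @ path_front G l' @ r" using u e(4) by auto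
    then have "length (path_front G l') \<le> length (path_front G l)"
      using lmax e(3) by (auto simp: longest_inner_path_def factor_def)
    then show False using e(4) fn by simp
  qed
  then obtain us where us: "frontw G e = y @ us" "us @ w = [c] @ q"
    using e(5) by (auto simp: append_eq_append_conv2)
  moreover have "us \<noteq> []" using us(1) \<open>\<not> (\<exists>r. y = frontw G e @ r)\<close> by auto
  ultimately show ?thesis using e by (cases us) auto
qed

lemma left_extension_edge:
  assumes R: "rauzy_scheme G W" and lmax: "longest_inner_path G u l"
    and u: "u = x @ path_front G l @ y" and cu: "factor_of_inf (c # u) W"
  shows "\<exists>e r. e \<in> edges G \<and> tgt G e = src G (hd l) \<and> backw G e = r @ c # x"
proof -
  have sl: "symmetric_path G l" using lmax by (simp add: longest_inner_path_def)
  obtain s p q where s: "symmetric_path G s" and "path_front G s = p @ (c # u) @ q"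
    using rauzy_covers[OF R cu] by (auto simp: factor_def)
  then have "path_front G s = ((p @ [c]) @ x) @ path_front G l @ (y @ q)" using u by simp
  then obtain e l' w where e: "e \<in> edges G" "tgt G e = src G (hd l)" "symmetric_path G l'"
      "path_front G l' = backw G e @ path_front G l" "(p @ [c]) @ x = w @ backw G e"
    using extend_left[OF R s sl] by blast
  have bn: "backw G e \<noteq> []" using back_nonempty[OF R e(1)] e(2) symmetric_pathD(3)[OF sl] by simp
  have "\<not> (\<exists>r. x = r @ backw G e)"
  proof
    assume "\<exists>r. x = r @ backw G e"
    then obtain r where "u = r @ path_front G l' @ y" using u e(4) by auto
    then have "length (path_front G l') \<le> length (path_front G l)"
      using lmax e(3) by (auto simp: longest_inner_path_def factor_def)
    then show False using e(4) bn by simp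
  qed
  then obtain us where us: "p @ [c] = w @ us" "us @ x = backw G e"
    using append_eq_append_conv2[THEN iffD1, OF e(5)] by blast
  moreover have "us \<noteq> []" using us(2) \<open>\<not> (\<exists>r. x = r @ backw G e)\<close> by auto
  ultimately have "us = butlast us @ [c]" by (metis append_butlast_last_id last_appendR last_snoc)
  then have "backw G e = butlast us @ c # x" using us(2) by (metis append.assoc append_Cons append_Nil)
  then show ?thesis using e by blast
qed

text \<open>Right speciality of u forces F(l) to be a suffix of u: otherwise two distinct
  edges leaving the same distributing vertex would have front words starting with
  the same first letter of y, against condition (2).\<close>
lemma no_right_overhang:
  assumes R: "rauzy_scheme G W" and lmax: "longest_inner_path G u l"
    and u: "u = x @ path_front G l @ y" and rs: "right_special u W"
  shows "y = []"
proof (rule ccontr)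
  assume yn: "y \<noteq> []"
  obtain a b where ab: "a \<noteq> b" "factor_of_inf (u @ [a]) W" "factor_of_inf (u @ [b]) W"
    using rs by (auto simp: right_special_def)
  obtain ea ra where ea: "ea \<in> edges G" "src G ea = tgt G (last l)" "frontw G ea = y @ a # ra"
    using right_extension_edge[OF R lmax u ab(2)] by blast
  obtain eb rb where eb: "eb \<in> edges G" "src G eb = tgt G (last l)" "frontw G eb = y @ b # rb"
    using right_extension_edge[OF R lmax u ab(3)] by blast
  have sl: "symmetric_path G l" using lmax by (simp add: longest_inner_path_def)
  have "ea \<noteq> eb" using ea eb ab(1) by auto
  moreover have "distributing G (src G ea)"
    using ea(2) symmetric_pathD(4)[OF sl] by simp
  ultimately show False using rauzy_front_heads[OF R ea(1) eb(1)] ea eb yn by simp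
qed

text \<open>Dually, left speciality of u and condition (2) for back words make F(l) a
  prefix of u.\<close>
lemma no_left_overhang:
  assumes R: "rauzy_scheme G W" and lmax: "longest_inner_path G u l"
    and u: "u = x @ path_front G l @ y" and ls: "left_special u W"
  shows "x = []"
proof (rule ccontr)
  assume xn: "x \<noteq> []"
  obtain a b where ab: "a \<noteq> b" "factor_of_inf (a # u) W" "factor_of_inf (b # u) W"
    using ls by (auto simp: left_special_def)
  obtain ea ra where ea: "ea \<in> edges G" "tgt G ea = src G (hd l)" "backw G ea = ra @ a # x"
    using left_extension_edge[OF R lmax u ab(2)] by blast
  obtain eb rb where eb: "eb \<in> edges G" "tgt G eb = src G (hd l)" "backw G eb = rb @ b # x"
    using left_extension_edge[OF R lmax u ab(3)] by blast
  have sl: "symmetric_path G l" using lmax by (simp add: longest_inner_path_def)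
  have "ea \<noteq> eb" using ea eb ab(1) by auto
  moreover have "collecting G (tgt G ea)"
    using ea(2) symmetric_pathD(3)[OF sl] by simp
  ultimately show False using rauzy_back_lasts[OF R ea(1) eb(1)] ea eb xn by simp
qed

theorem mainTheorem7:
  fixes G :: "('v, 'e, 'a) gww" and W :: "nat \<Rightarrow> 'a" and u :: "'a list"
  assumes "recurrent W"
    and "rauzy_scheme G W"
    and "bispecial u W"
    and "\<exists>l1. symmetric_path G l1 \<and> factor (path_front G l1) u"
  shows "\<exists>l. symmetric_path G l \<and> path_front G l = u"
proof -
  obtain l where lmax: "longest_inner_path G u l"
    using longest_inner_path_exists[OF assms(4)] by blast
  then obtain x y where u: "u = x @ path_front G l @ y"
    by (auto simp: longest_inner_path_def factor_def)
  have "y = []"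
    using no_right_overhang[OF assms(2) lmax u] assms(3) by (simp add: bispecial_def)
  moreover have "x = []"
    using no_left_overhang[OF assms(2) lmax u] assms(3) by (simp add: bispecial_def)
  ultimately show ?thesis
    using lmax u by (auto simp: longest_inner_path_def)
qed

end
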